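(* Let $\Sigma$ be an alphabet and $R'\subseteq R\subseteq\Sigma^*\times\Sigma^*$. Let $P$ be a finite derivational proof in $\langle\Sigma\mid R'\rangle$. If $P\models R$ and the derivation graph $\Gamma_D(P)$ is acyclic, then there exists a sequence of exactly $|R\setminus R'|$ $\mathbf{Rel}(+)$ transformations between $\langle\Sigma\mid R'\rangle$ and $\langle\Sigma\mid R\rangle$.
   Context: For an alphabet $\Sigma$, $\Sigma^*$ is the free monoid of words. For $S\subseteq\Sigma^*\times\Sigma^*$, $\langle\Sigma\mid S\rangle$ is the quotient of $\Sigma^*$ by the congruence generated by $S$; for words $u,v$ and $(q,r)\in\Sigma^*\times\Sigma^*$ we write $u\xrightarrow{(q,r)}v$ if $u=sqt$ and $v=srt$ for some words $s,t$; $u\sim_Sv$ means $u$ is transformed into $v$ by finitely many steps $\xrightarrow{\rho}$ or their reverses with $\rho\in S$. A $\mathbf{Rel}(+)$ transformation passes from $\langle\Sigma\mid S\rangle$ to $\langle\Sigma\mid S\cup\{(q,r)\}\rangle$ where $q\sim_Sr$; a sequence of $m$ such transformations between two presentations is a chain of $m+1$ presentations from the first to the second, each obtained from the previous by one such transformation. Let $L(\Sigma)=\mathbb{N}\times(\Sigma^*\times\Sigma^* )$ (labels). A derivational proof in $\langle\Sigma\mid R'\rangle$ is a set $P\subseteq L(\Sigma)\times(L(\Sigma)\cup R')^*$ such that: (indexed) distinct elements of $P$ have distinct labels; (well-founded) for every $(\ell,d)\in P$ and every letter $d_k$ of $d$, either $d_k\in R'$, or $d_k\in L(\Sigma)$ and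 $(d_k,d')\in P$ for some $d'$; (valid) for every $(\ell,d)\in P$ with $\ell=(n,(w,w'))$ and $m=|d|$ there are words $v_1,\dots,v_{m+1}$ with $v_1=w$, $v_{m+1}=w'$ and, for each $k\le m$, $v_k\xrightarrow{d_k}v_{k+1}$ if $d_k\in R'$, and $v_k\xrightarrow{r}v_{k+1}$ if $d_k=(n',r)\in L(\Sigma)$. We write $P\models R$ if $R\subseteq R'\cup\{r\mid((n,r),d)\in P\}$. The derivation graph $\Gamma_D(P)$ has as vertices the labels $\ell$ with $(\ell,d)\in P$, and an edge $(\ell,\ell')$ whenever $\ell'$ occurs as a letter of $d$ for some $(\ell,d)\in P$. A directed graph is acyclic if it has no directed path of positive length from a vertex to itself. *)

theory Defs
  imports Main
begin

text \<open>The alphabet \<Sigma> is the type 'a; words are lists; relations are sets of pairs of words.\<close>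

type_synonym 'a word = "'a list"
type_synonym 'a rel_pair = "'a word \<times> 'a word"
type_synonym 'a label = "nat \<times> 'a rel_pair"

definition rstep :: "'a rel_pair \<Rightarrow> 'a word \<Rightarrow> 'a word \<Rightarrow> bool" where
  "rstep \<rho> u v \<longleftrightarrow> (\<exists>s t. u = s @ fst \<rho> @ t \<and> v = s @ snd \<rho> @ t)"

definition pres_equiv :: "'a rel_pair set \<Rightarrow> 'a word \<Rightarrow> 'a word \<Rightarrow> bool" where
  "pres_equiv S = (\<lambda>u v. \<exists>\<rho>\<in>S. rstep \<rho> u v \<or> rstep \<rho> v u)\<^sup>*\<^sup>*"

definition rel_plus :: "'a rel_pair set \<Rightarrow> 'a rel_pair set \<Rightarrow> bool" where
  "rel_plus S S' \<longleftrightarrow> (\<exists>q r. pres_equiv S q r \<and> S' = S \<union> {(q, r)})"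

definition rel_plus_seq :: "nat \<Rightarrow> 'a rel_pair set \<Rightarrow> 'a rel_pair set \<Rightarrow> bool" where
  "rel_plus_seq m S T \<longleftrightarrow>
     (\<exists>f :: nat \<Rightarrow> 'a rel_pair set. f 0 = S \<and> f m = T \<and> (\<forall>i<m. rel_plus (f i) (f (Suc i))))"

text \<open>Letters of a derivation are from L(\<Sigma>) \<union> R', encoded as a sum type:
  Inl for labels, Inr for relations (which must lie in R').\<close>
type_synonym 'a letter = "'a label + 'a rel_pair"

definition letter_rel :: "'a letter \<Rightarrow> 'a rel_pair" where
  "letter_rel x = (case x of Inl (n', r) \<Rightarrow> r | Inr \<rho> \<Rightarrow> \<rho>)"

definition derivational_proof ::
  "'a rel_pair set \<Rightarrow> ('a label \<times> 'a letter list) set \<Rightarrow> bool" where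
  "derivational_proof R' P \<longleftrightarrow>
     \<comment> \<open>indexed\<close>
     (\<forall>p\<in>P. \<forall>p'\<in>P. fst p = fst p' \<longrightarrow> p = p') \<and>
     \<comment> \<open>well-founded\<close>
     (\<forall>(l, d)\<in>P. \<forall>x\<in>set d.
        (case x of Inr \<rho> \<Rightarrow> \<rho> \<in> R' | Inl l' \<Rightarrow> (\<exists>d'. (l', d') \<in> P))) \<and>
     \<comment> \<open>valid\<close>
     (\<forall>(l, d)\<in>P. \<exists>v :: nat \<Rightarrow> 'a word.
        v 0 = fst (snd l) \<and> v (length d) = snd (snd l) \<and>
        (\<forall>k<length d. rstep (letter_rel (d ! k)) (v k) (v (Suc k))))"

definition proof_models ::
  "'a rel_pair set \<Rightarrow> ('a label \<times> 'a letter list) set \<Rightarrow> 'a rel_pair set \<Rightarrow> bool" where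
  "proof_models R' P R \<longleftrightarrow> R \<subseteq> R' \<union> {r. \<exists>n d. ((n, r), d) \<in> P}"

definition derivation_graph :: "('a label \<times> 'a letter list) set \<Rightarrow> ('a label \<times> 'a label) set" where
  "derivation_graph P = {(l, l'). \<exists>d. (l, d) \<in> P \<and> Inl l' \<in> set d}"

end

theory Submission
  imports Defs
begin

text \<open>Every label of P names a relation that already holds in \<open>\<langle>\<Sigma> | R'\<rangle>\<close>. Since P is finite,
  its acyclic derivation graph is well-founded, so this follows by induction along the graph:
  each letter of a derivation is either a relation of R' or a label already known to be a
  consequence of R', and a consequence of R' may be applied inside any context. Hence the
  relations of \<open>R - R'\<close> can be added one at a time, each by a single Rel(+) step.\<close>

lemma rstep_append_context: "rstep \<rho> u v \<Longrightarrow> rstep \<rho> (s @ u @ t) (s @ v @ t)"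
  unfolding rstep_def by (metis append.assoc)

lemma pres_equiv_refl: "pres_equiv S u u"
  unfolding pres_equiv_def by simp

lemma pres_equiv_trans: "pres_equiv S u v \<Longrightarrow> pres_equiv S v w \<Longrightarrow> pres_equiv S u w"
  unfolding pres_equiv_def by (rule rtranclp_trans)

lemma pres_equiv_mono: "S \<subseteq> T \<Longrightarrow> pres_equiv S u v \<Longrightarrow> pres_equiv T u v"
  unfolding pres_equiv_def by (erule rtranclp_mono[THEN predicate2D, rotated]) blast

lemma pres_equiv_if_rstep: "\<rho> \<in> S \<Longrightarrow> rstep \<rho> u v \<Longrightarrow> pres_equiv S u v"
  unfolding pres_equiv_def by (rule r_into_rtranclp) blast

lemma pres_equiv_append_context:
  assumes "pres_equiv S u v"
  shows "pres_equiv S (s @ u @ t) (s @ v @ t)"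
  using assms unfolding pres_equiv_def
proof (induction rule: rtranclp_induct)
  case (step y z)
  then have "\<exists>\<rho>\<in>S. rstep \<rho> (s @ y @ t) (s @ z @ t) \<or> rstep \<rho> (s @ z @ t) (s @ y @ t)"
    using rstep_append_context by blast
  with step.IH show ?case by (rule rtranclp.rtrancl_into_rtrancl)
qed simp

lemma pres_equiv_if_rstep_derivable:
  assumes "pres_equiv S (fst \<rho>) (snd \<rho>)" and "rstep \<rho> u v"
  shows "pres_equiv S u v"
  using assms(2) pres_equiv_append_context[OF assms(1)] unfolding rstep_def by auto

lemma pres_equiv_chain:
  "(\<And>k. k < n \<Longrightarrow> pres_equiv S (v k) (v (Suc k))) \<Longrightarrow> pres_equiv S (v 0) (v n)"
  by (induction n) (auto intro: pres_equiv_refl pres_equiv_trans)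

lemma derivation_graph_subset:
  assumes "derivational_proof R' P"
  shows "derivation_graph P \<subseteq> fst ` P \<times> fst ` P"
proof
  fix e assume "e \<in> derivation_graph P"
  then obtain l l' d where e: "e = (l, l')" "(l, d) \<in> P" "Inl l' \<in> set d"
    unfolding derivation_graph_def by auto
  with assms obtain d' where "(l', d') \<in> P"
    unfolding derivational_proof_def by fastforce
  with e show "e \<in> fst ` P \<times> fst ` P" by force
qed

lemma wf_converse_derivation_graph:
  assumes "finite P" and "derivational_proof R' P" and "acyclic (derivation_graph P)"
  shows "wf ((derivation_graph P)\<inverse>)"
proof (rule finite_acyclic_wf_converse[OF _ assms(3)])
  show "finite (derivation_graph P)"
    using finite_subset[OF derivation_graph_subset[OF assms(2)]] assms(1) by blast
qed

lemma label_pres_equiv_if_successors: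
  assumes dp: "derivational_proof R' P" and ld: "(l, d) \<in> P"
    and IH: "\<And>l' d'. (l, l') \<in> derivation_graph P \<Longrightarrow> (l', d') \<in> P \<Longrightarrow>
               pres_equiv R' (fst (snd l')) (snd (snd l'))"
  shows "pres_equiv R' (fst (snd l)) (snd (snd l))"
proof -
  obtain v where v0: "v 0 = fst (snd l)" and vlen: "v (length d) = snd (snd l)"
    and steps: "\<And>k. k < length d \<Longrightarrow> rstep (letter_rel (d ! k)) (v k) (v (Suc k))"
    using dp ld unfolding derivational_proof_def by fastforce
  have "pres_equiv R' (v k) (v (Suc k))" if k: "k < length d" for k
  proof (cases "d ! k")
    case (Inr \<rho>)
    then have "\<rho> \<in> R'"
      using dp ld nth_mem[OF k] unfolding derivational_proof_def by fastforce
    with Inr steps[OF k] show ?thesis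
      by (simp add: letter_rel_def pres_equiv_if_rstep)
  next
    case (Inl l')
    have "(l, l') \<in> derivation_graph P"
      using ld nth_mem[OF k] Inl unfolding derivation_graph_def by force
    moreover obtain d' where "(l', d') \<in> P"
      using dp ld nth_mem[OF k] Inl unfolding derivational_proof_def by fastforce
    ultimately have "pres_equiv R' (fst (snd l')) (snd (snd l'))" by (rule IH)
    with Inl steps[OF k] show ?thesis
      by (auto simp: letter_rel_def split: prod.splits intro: pres_equiv_if_rstep_derivable)
  qed
  with pres_equiv_chain[of "length d" R' v] v0 vlen show ?thesis by simp
qed

lemma derivational_proof_label_pres_equiv:
  assumes "finite P" and dp: "derivational_proof R' P" and "acyclic (derivation_graph P)"
    and "(l, d) \<in> P"
  shows "pres_equiv R' (fst (snd l)) (snd (snd l))"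
  using assms(4)
proof (induction l arbitrary: d rule: wf_induct_rule[OF wf_converse_derivation_graph[OF assms(1-3)]])
  case (1 l)
  show ?case
    by (rule label_pres_equiv_if_successors[OF dp "1.prems"]) (simp add: "1.IH")
qed

lemma rel_plus_seq_refl: "rel_plus_seq 0 S S"
  unfolding rel_plus_seq_def by auto

lemma rel_plus_seq_snoc:
  assumes "rel_plus_seq m S T" and "rel_plus T U"
  shows "rel_plus_seq (Suc m) S U"
proof -
  obtain f where "f 0 = S" "f m = T" "\<forall>i<m. rel_plus (f i) (f (Suc i))"
    using assms(1) unfolding rel_plus_seq_def by blast
  with assms(2) show ?thesis
    unfolding rel_plus_seq_def by (intro exI[of _ "f(Suc m := U)"]) (auto simp: less_Suc_eq)
qed

lemma rel_plus_seq_add_derivable: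
  assumes "finite A" and "\<And>\<rho>. \<rho> \<in> A \<Longrightarrow> pres_equiv S (fst \<rho>) (snd \<rho>)"
  shows "rel_plus_seq (card A) S (S \<union> A)"
  using assms
proof (induction A rule: finite_induct)
  case empty
  then show ?case by (simp add: rel_plus_seq_refl)
next
  case (insert \<rho> A)
  have "rel_plus_seq (card A) S (S \<union> A)"
    using insert.IH insert.prems by blast
  moreover have "pres_equiv (S \<union> A) (fst \<rho>) (snd \<rho>)"
    using pres_equiv_mono[of S "S \<union> A"] insert.prems by blast
  then have "rel_plus (S \<union> A) (S \<union> insert \<rho> A)"
    unfolding rel_plus_def by (intro exI[of _ "fst \<rho>"] exI[of _ "snd \<rho>"]) auto
  ultimately show ?case
    using insert.hyps by (simp add: rel_plus_seq_snoc)
qed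

theorem theorem9:
  fixes R' R :: "'a rel_pair set" and P :: "('a label \<times> 'a letter list) set"
  assumes "R' \<subseteq> R"
    and "finite P"
    and "derivational_proof R' P"
    and "proof_models R' P R"
    and "acyclic (derivation_graph P)"
  shows "rel_plus_seq (card (R - R')) R' R"
proof -
  have labelled: "R - R' \<subseteq> (\<lambda>p. snd (fst p)) ` P"
    using assms(4) unfolding proof_models_def by force
  have "pres_equiv R' (fst \<rho>) (snd \<rho>)" if "\<rho> \<in> R - R'" for \<rho>
    using labelled that derivational_proof_label_pres_equiv[OF assms(2,3,5)] by force
  moreover have "finite (R - R')"
    using finite_subset[OF labelled] assms(2) by blast
  ultimately have "rel_plus_seq (card (R - R')) R' (R' \<union> (R - R'))"
    by (rule rel_plus_seq_add_derivable[rotated])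
  with assms(1) show ?thesis
    by (simp add: Un_absorb1)
qed

end
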